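(* Consider the channel $\mathbf r=\mathbf s+\boldsymbol\xi$ in $\mathbb R^n$ with $\boldsymbol\xi\sim\mathcal N(\mathbf 0,\sigma_0^2\mathbf I)$ and SNR $\gamma=1/\sigma_0^2>0$, and a decoder whose decision region for each constellation point $\mathbf s_k$ is the ball of a common radius $d>0$ centered at $\mathbf s_k$ (if the received vector lies in no decision region, an error is declared). Then the average symbol error rate satisfies: $P_e''(\gamma)>0$ if $\gamma>(n-2)/d^2$; $P_e''(\gamma)<0$ if $\gamma<(n-2)/d^2$; and $P_e''(\gamma)=0$ if $\gamma=(n-2)/d^2$.
   Context: The constellation $\{\mathbf s_1,\dots,\mathbf s_M\}$ is transmitted with prior probabilities $\pi_k$; the decision regions $\Omega_k$ do not depend on $\gamma$. The symbol error rate given $\mathbf s_k$ is $P_{ek}=1-\Pr[\mathbf r\in\Omega_k\mid \mathbf s=\mathbf s_k]$ and $P_e=\sum_k\pi_kP_{ek}$. Derivatives are with respect to $\gamma$. *)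

theory Defs
  imports "HOL-Analysis.Analysis"
begin

definition iso_gauss_pdf :: "real \<Rightarrow> real^'n \<Rightarrow> real" where
  "iso_gauss_pdf v x =
     (2 * pi * v) powr (- real CARD('n) / 2) * exp (- (norm x * norm x) / (2 * v))"

definition noise_measure :: "real \<Rightarrow> (real^'n) measure" where
  "noise_measure v = density lborel (\<lambda>x. ennreal (iso_gauss_pdf v x))"

definition sym_err :: "real \<Rightarrow> real^'n \<Rightarrow> (real^'n) set \<Rightarrow> real" where
  "sym_err \<gamma> s \<Omega> = 1 - measure (noise_measure (1 / \<gamma>)) {\<xi>. s + \<xi> \<in> \<Omega>}"

definition avg_ser :: "nat \<Rightarrow> (nat \<Rightarrow> real) \<Rightarrow> (nat \<Rightarrow> real^'n) \<Rightarrow> (nat \<Rightarrow> (real^'n) set)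
    \<Rightarrow> real \<Rightarrow> real" where
  "avg_ser M p s \<Omega> \<gamma> = (\<Sum>k<M. p k * sym_err \<gamma> (s k) (\<Omega> k))"

end

theory Submission
  imports Defs
begin

text \<open>Translating by \<open>s\<^sub>k\<close> and rescaling the noise by \<open>sqrt \<gamma>\<close> shows that every \<open>P\<^sub>e\<^sub>k\<close>, hence
  \<open>P\<^sub>e\<close>, equals \<open>1 - (2\<pi>)^(-n/2) J(d sqrt \<gamma>)\<close>, where \<open>J R\<close> is the integral of \<open>exp (-|y|^2/2)\<close>
  over the ball of radius \<open>R\<close>. Squeezing the integral over a thin shell between the extreme values of
  the kernel gives \<open>J' R = exp (-R^2/2) n \<omega>\<^sub>n R^(n-1)\<close>, so by the chain rule
  \<open>P\<^sub>e' \<gamma> = -c \<gamma>^(n/2-1) exp (-d^2\<gamma>/2)\<close> with \<open>c > 0\<close>, and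
  \<open>P\<^sub>e'' \<gamma> = c/2 \<gamma>^(n/2-2) exp (-d^2\<gamma>/2) (d^2\<gamma> - (n - 2))\<close>, whose sign is that of
  \<open>\<gamma> - (n - 2)/d^2\<close>.\<close>

lemma DERIV_increment_sandwich:
  fixes I V e :: "real \<Rightarrow> real"
  assumes S: "open S" "R \<in> S"
    and V: "(V has_field_derivative V') (at R)"
    and e: "isCont e R"
    and bounds: "\<And>a b. a \<in> S \<Longrightarrow> b \<in> S \<Longrightarrow> a \<le> b \<Longrightarrow>
      min (e a) (e b) * (V b - V a) \<le> I b - I a \<and> I b - I a \<le> max (e a) (e b) * (V b - V a)"
  shows "(I has_field_derivative e R * V') (at R)"
proof -
  define q where "q = (\<lambda>y. (V y - V R) / (y - R))"
  have quotient_bounds: "min (e y) (e R) * q y \<le> (I y - I R) / (y - R) \<and>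
      (I y - I R) / (y - R) \<le> max (e y) (e R) * q y" if y: "y \<in> S" "y \<noteq> R" for y
  proof (cases "R < y")
    case True
    have "min (e R) (e y) * (V y - V R) / (y - R) \<le> (I y - I R) / (y - R)"
      "(I y - I R) / (y - R) \<le> max (e R) (e y) * (V y - V R) / (y - R)"
      using bounds[of R y] S y True by (simp_all add: divide_right_mono)
    then show ?thesis by (simp add: q_def min.commute max.commute)
  next
    case False
    then have yR: "y < R" using y by simp
    have "min (e y) (e R) * (V R - V y) / (R - y) \<le> (I R - I y) / (R - y)"
      "(I R - I y) / (R - y) \<le> max (e y) (e R) * (V R - V y) / (R - y)"
      using bounds[of y R] S y yR by (simp_all add: divide_right_mono)
    moreover have "c * (u - v) / (R - y) = c * (v - u) / (y - R)" for c u v :: real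
      by (metis minus_diff_eq minus_divide_divide mult_minus_right)
    ultimately show ?thesis by (metis q_def minus_diff_eq minus_divide_divide times_divide_eq_right)
  qed
  have near: "eventually (\<lambda>y. y \<in> S \<and> y \<noteq> R) (at R)"
    using S eventually_at_topological by blast
  have q: "(q \<longlongrightarrow> V') (at R)"
    using V by (simp add: has_field_derivative_iff q_def)
  have eR: "(e \<longlongrightarrow> e R) (at R)"
    using e isCont_def by blast
  have "((\<lambda>y. (I y - I R) / (y - R)) \<longlongrightarrow> e R * V') (at R)"
  proof (rule tendsto_sandwich)
    show "eventually (\<lambda>y. min (e y) (e R) * q y \<le> (I y - I R) / (y - R)) (at R)"
      using near by eventually_elim (use quotient_bounds in blast)
    show "eventually (\<lambda>y. (I y - I R) / (y - R) \<le> max (e y) (e R) * q y) (at R)"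
      using near by eventually_elim (use quotient_bounds in blast)
    show "((\<lambda>y. min (e y) (e R) * q y) \<longlongrightarrow> e R * V') (at R)"
      using tendsto_mult[OF tendsto_min[OF eR tendsto_const[of "e R"]] q] by simp
    show "((\<lambda>y. max (e y) (e R) * q y) \<longlongrightarrow> e R * V') (at R)"
      using tendsto_mult[OF tendsto_max[OF eR tendsto_const[of "e R"]] q] by simp
  qed
  then show ?thesis by (simp add: has_field_derivative_iff)
qed

definition gauss_kernel :: "'a::real_normed_vector \<Rightarrow> real" where
  "gauss_kernel y = exp (- (norm y * norm y) / 2)"

lemma gauss_kernel_nonneg: "0 \<le> gauss_kernel y"
  by (simp add: gauss_kernel_def)

lemma continuous_on_gauss_kernel: "continuous_on S gauss_kernel"
  unfolding gauss_kernel_def by (intro continuous_intros) auto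

lemma integrable_gauss_kernel_ball:
  "gauss_kernel integrable_on ball (0::'a::euclidean_space) r"
proof -
  have "gauss_kernel absolutely_integrable_on ball (0::'a) r"
  proof (rule measurable_bounded_by_integrable_imp_absolutely_integrable[where g = "\<lambda>_. 1"])
    show "gauss_kernel \<in> borel_measurable (lebesgue_on (ball (0::'a) r))"
      by (rule continuous_imp_measurable_on_sets_lebesgue[OF continuous_on_gauss_kernel]) auto
  qed (auto intro!: integrable_on_const simp: gauss_kernel_def)
  then show ?thesis
    by (simp add: absolutely_integrable_on_def)
qed

lemma integral_one_ball:
  assumes "0 \<le> r"
  shows "integral (ball (0::'a::euclidean_space) r) (\<lambda>_. 1::real) = unit_ball_vol DIM('a) * r ^ DIM('a)"
proof -
  have "integral (ball (0::'a) r) (\<lambda>_. 1::real) = measure lebesgue (ball (0::'a) r)"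
    by (rule lmeasure_integral[symmetric]) simp
  then show ?thesis
    using content_ball[OF assms] by simp
qed

lemma gauss_kernel_shell_bounds:
  assumes "0 \<le> a" "a \<le> b"
  defines "I \<equiv> \<lambda>r. integral (ball (0::'a::euclidean_space) r) gauss_kernel"
    and "vol \<equiv> \<lambda>r. unit_ball_vol DIM('a) * r ^ DIM('a)"
  shows "exp (- (b * b) / 2) * (vol b - vol a) \<le> I b - I a"
    and "I b - I a \<le> exp (- (a * a) / 2) * (vol b - vol a)"
proof -
  let ?S = "ball (0::'a) b - ball 0 a"
  have "ball (0::'a) a \<subseteq> ball 0 b"
    using assms by auto
  then have negligible: "negligible (ball (0::'a) a - ball 0 b)"
    by simp
  have one: "(\<lambda>_. 1::real) integrable_on ball (0::'a) r" for r
    by (intro integrable_on_const) simp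
  have I_shell: "integral ?S gauss_kernel = I b - I a"
    unfolding I_def
    by (rule integral_setdiff[OF integrable_gauss_kernel_ball integrable_gauss_kernel_ball negligible])
  have vol_shell: "integral ?S (\<lambda>_. c) = c * (vol b - vol a)" for c :: real
    using integral_setdiff[OF one one negligible] integral_mult_right[of ?S c "\<lambda>_. 1::real"]
      integral_one_ball[of a, where 'a = 'a] integral_one_ball[of b, where 'a = 'a] assms
    by (simp add: vol_def)
  have integrable: "gauss_kernel integrable_on ?S"
    by (rule integrable_setdiff[OF integrable_integral[OF integrable_gauss_kernel_ball]
          integrable_integral[OF integrable_gauss_kernel_ball] negligible])
  have const: "(\<lambda>_. c::real) integrable_on ?S" for c
    by (intro integrable_on_const) auto
  have "exp (- (b * b) / 2) \<le> gauss_kernel y" "gauss_kernel y \<le> exp (- (a * a) / 2)"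
    if "y \<in> ?S" for y
  proof -
    have "a \<le> norm y" "norm y \<le> b"
      using that by (auto simp: dist_norm)
    then have "a * a \<le> norm y * norm y" "norm y * norm y \<le> b * b"
      using assms by (auto intro: mult_mono)
    then show "exp (- (b * b) / 2) \<le> gauss_kernel y" "gauss_kernel y \<le> exp (- (a * a) / 2)"
      by (simp_all add: gauss_kernel_def)
  qed
  then have "integral ?S (\<lambda>_. exp (- (b * b) / 2)) \<le> integral ?S gauss_kernel"
    and "integral ?S gauss_kernel \<le> integral ?S (\<lambda>_. exp (- (a * a) / 2))"
    by (auto intro!: integral_le const integrable)
  then show "exp (- (b * b) / 2) * (vol b - vol a) \<le> I b - I a"
    and "I b - I a \<le> exp (- (a * a) / 2) * (vol b - vol a)"
    by (simp_all add: I_shell vol_shell)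
qed

lemma has_field_derivative_gauss_kernel_ball:
  assumes "0 < R"
  shows "((\<lambda>r. integral (ball (0::'a::euclidean_space) r) gauss_kernel) has_field_derivative
      exp (- (R * R) / 2) * (unit_ball_vol DIM('a) * (real DIM('a) * R ^ (DIM('a) - 1)))) (at R)"
proof (rule DERIV_increment_sandwich[where S = "{0<..}"])
  let ?vol = "\<lambda>r. unit_ball_vol DIM('a) * r ^ DIM('a)"
  show "(?vol has_field_derivative unit_ball_vol DIM('a) * (real DIM('a) * R ^ (DIM('a) - 1))) (at R)"
    by (auto intro!: derivative_eq_intros)
  show "isCont (\<lambda>r. exp (- (r * r) / 2)) R"
    by (intro continuous_intros) auto
  fix a b :: real
  assume ab: "a \<in> {0<..}" "b \<in> {0<..}" "a \<le> b"
  let ?I = "\<lambda>r. integral (ball (0::'a) r) gauss_kernel"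
  have "0 \<le> ?vol b - ?vol a"
    using ab by (auto intro!: mult_left_mono power_mono)
  then have "min (exp (- (a * a) / 2)) (exp (- (b * b) / 2)) * (?vol b - ?vol a)
      \<le> exp (- (b * b) / 2) * (?vol b - ?vol a)"
    and "exp (- (a * a) / 2) * (?vol b - ?vol a)
      \<le> max (exp (- (a * a) / 2)) (exp (- (b * b) / 2)) * (?vol b - ?vol a)"
    by (simp_all add: mult_right_mono)
  with gauss_kernel_shell_bounds[of a b, where 'a = 'a] ab
  show "min (exp (- (a * a) / 2)) (exp (- (b * b) / 2)) * (?vol b - ?vol a) \<le> ?I b - ?I a \<and>
      ?I b - ?I a \<le> max (exp (- (a * a) / 2)) (exp (- (b * b) / 2)) * (?vol b - ?vol a)"
    by auto
qed (use assms in auto)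

lemma nn_integral_lborel_scaleR:
  fixes f :: "'a::euclidean_space \<Rightarrow> ennreal"
  assumes [measurable]: "f \<in> borel_measurable borel" and "c \<noteq> 0"
  shows "(\<integral>\<^sup>+x. f x \<partial>lborel) = ennreal (\<bar>c\<bar> ^ DIM('a)) * (\<integral>\<^sup>+x. f (c *\<^sub>R x) \<partial>lborel)"
  by (subst lborel_affine[OF \<open>c \<noteq> 0\<close>, of 0])
     (simp add: nn_integral_density nn_integral_distr nn_integral_cmult)

lemma iso_gauss_pdf_nonneg: "0 \<le> iso_gauss_pdf v x"
  by (simp add: iso_gauss_pdf_def)

lemma iso_gauss_pdf_scaleR_sqrt:
  assumes "0 < v"
  shows "iso_gauss_pdf v (sqrt v *\<^sub>R x) = (2 * pi * v) powr (- real CARD('n) / 2) * gauss_kernel (x :: real^'n)"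
proof -
  have "norm (sqrt v *\<^sub>R x) * norm (sqrt v *\<^sub>R x) / (2 * v) = norm x * norm x / 2"
    using assms by (simp add: power2_eq_square[symmetric] power_mult_distrib)
  then show ?thesis
    unfolding iso_gauss_pdf_def gauss_kernel_def by (simp add: minus_divide_left[symmetric] del: minus_divide_left)
qed

lemma sqrt_pow_mult_gauss_normalization:
  assumes "0 < v"
  shows "sqrt v ^ n * (2 * pi * v) powr (- real n / 2) = (2 * pi) powr (- real n / 2)"
proof -
  have "sqrt v ^ n = v powr (real n / 2)"
    using assms by (simp add: powr_half_sqrt[symmetric] powr_realpow[symmetric] powr_powr)
  moreover have "(2 * pi * v) powr (- real n / 2) = (2 * pi) powr (- real n / 2) * v powr (- real n / 2)"
    using assms by (simp add: powr_mult)
  moreover have "v powr (real n / 2) * v powr (- real n / 2) = 1"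
    using assms by (simp add: powr_add[symmetric])
  ultimately show ?thesis
    by (simp add: algebra_simps)
qed

lemma measure_noise_measure_ball:
  assumes "0 < v"
  shows "measure (noise_measure v) (ball (0::real^'n) d)
    = (2 * pi) powr (- real CARD('n) / 2) * integral (ball (0::real^'n) (d / sqrt v)) gauss_kernel"
proof -
  let ?K = "(2 * pi) powr (- real CARD('n) / 2)"
  let ?B = "ball (0::real^'n) (d / sqrt v)"
  define c where "c = sqrt v"
  have c: "0 < c"
    using assms by (simp add: c_def)
  have [measurable]: "iso_gauss_pdf v \<in> borel_measurable (borel :: (real^'n) measure)"
    unfolding iso_gauss_pdf_def by measurable
  have [measurable]: "gauss_kernel \<in> borel_measurable (borel :: (real^'n) measure)"
    unfolding gauss_kernel_def by measurable
  have [measurable]: "ball (0::real^'n) r \<in> sets borel" for r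
    by simp
  have rescale: "ennreal (\<bar>c\<bar> ^ DIM(real^'n)) * (ennreal (iso_gauss_pdf v (c *\<^sub>R x)) * indicator (ball 0 d) (c *\<^sub>R x))
      = ennreal ?K * ennreal (indicator ?B x * gauss_kernel x)" for x :: "real^'n"
  proof -
    have "c *\<^sub>R x \<in> ball 0 d \<longleftrightarrow> x \<in> ?B"
      using c by (simp add: c_def field_simps)
    moreover have "c ^ CARD('n) * iso_gauss_pdf v (c *\<^sub>R x) = ?K * gauss_kernel x"
      using iso_gauss_pdf_scaleR_sqrt[OF assms, of x] sqrt_pow_mult_gauss_normalization[OF assms, of "CARD('n)"]
      by (simp add: c_def flip: mult.assoc)
    ultimately show ?thesis
      using c by (auto simp: indicator_def gauss_kernel_nonneg iso_gauss_pdf_nonneg ennreal_mult[symmetric])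
  qed
  have "emeasure (noise_measure v) (ball (0::real^'n) d)
      = (\<integral>\<^sup>+(x::real^'n). ennreal (iso_gauss_pdf v x) * indicator (ball 0 d) x \<partial>lborel)"
    unfolding noise_measure_def by (rule emeasure_density) auto
  also have "\<dots> = ennreal (\<bar>c\<bar> ^ DIM(real^'n))
      * (\<integral>\<^sup>+(x::real^'n). ennreal (iso_gauss_pdf v (c *\<^sub>R x)) * indicator (ball 0 d) (c *\<^sub>R x) \<partial>lborel)"
    by (rule nn_integral_lborel_scaleR[where f = "\<lambda>x. ennreal (iso_gauss_pdf v x) * indicator (ball 0 d) x"])
      (measurable, use c in simp)
  also have "\<dots> = (\<integral>\<^sup>+(x::real^'n). ennreal (\<bar>c\<bar> ^ DIM(real^'n))
      * (ennreal (iso_gauss_pdf v (c *\<^sub>R x)) * indicator (ball 0 d) (c *\<^sub>R x)) \<partial>lborel)"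
    by (rule nn_integral_cmult[symmetric]) measurable
  also have "\<dots> = (\<integral>\<^sup>+(x::real^'n). ennreal ?K * ennreal (indicator ?B x * gauss_kernel x) \<partial>lborel)"
    by (simp only: rescale)
  also have "\<dots> = ennreal ?K * (\<integral>\<^sup>+(x::real^'n). ennreal (indicator ?B x * gauss_kernel x) \<partial>lborel)"
    by (rule nn_integral_cmult) (unfold gauss_kernel_def, measurable)
  also have "(\<integral>\<^sup>+(x::real^'n). ennreal (indicator ?B x * gauss_kernel x) \<partial>lborel) = integral ?B gauss_kernel"
    by (intro nn_integral_has_integral_lebesgue integrable_integral integrable_gauss_kernel_ball)
      (simp add: gauss_kernel_nonneg)
  finally show ?thesis
    unfolding measure_def
    by (simp add: ennreal_mult''[symmetric] integral_nonneg integrable_gauss_kernel_ball gauss_kernel_nonneg)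
qed

lemma sym_err_ball:
  fixes s :: "real^'n"
  assumes "0 < g"
  shows "sym_err g s (ball s d)
    = 1 - (2 * pi) powr (- real CARD('n) / 2) * integral (ball (0::real^'n) (d * sqrt g)) gauss_kernel"
proof -
  have translate: "{\<xi>. s + \<xi> \<in> ball s d} = ball 0 d"
    by (auto simp: dist_norm)
  have radius: "d / sqrt (1 / g) = d * sqrt g"
    using assms by (simp add: real_sqrt_divide)
  have "0 < 1 / g"
    using assms by simp
  show ?thesis
    unfolding sym_err_def translate measure_noise_measure_ball[OF \<open>0 < 1 / g\<close>] radius ..
qed

lemma avg_ser_balls:
  fixes s :: "nat \<Rightarrow> real^'n"
  assumes "(\<Sum>k<M. p k) = 1" and "0 < g"
  shows "avg_ser M p s (\<lambda>k. ball (s k) d) g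
    = 1 - (2 * pi) powr (- real CARD('n) / 2) * integral (ball (0::real^'n) (d * sqrt g)) gauss_kernel"
proof -
  have "avg_ser M p s (\<lambda>k. ball (s k) d) g = (\<Sum>k<M. p k) * sym_err g 0 (ball (0::real^'n) d)"
    using assms(2) by (simp add: avg_ser_def sym_err_ball sum_distrib_right)
  then show ?thesis
    using assms by (simp add: sym_err_ball)
qed

lemma sqrt_power_diff_one_div:
  assumes "0 < g" and "1 \<le> n"
  shows "sqrt g ^ (n - 1) / sqrt g = g powr (real n / 2 - 1)"
proof -
  have "sqrt g ^ (n - 1) = g powr (real (n - 1) / 2)"
    using assms by (simp add: powr_half_sqrt[symmetric] powr_realpow[symmetric] powr_powr)
  moreover have "sqrt g = g powr (1 / 2)"
    using assms by (simp add: powr_half_sqrt)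
  moreover have "real (n - 1) / 2 - 1 / 2 = real n / 2 - 1"
    using assms by (simp add: of_nat_diff field_simps)
  ultimately show ?thesis
    by (simp only: powr_diff[symmetric])
qed

lemma has_field_derivative_gauss_kernel_ball_sqrt:
  assumes "0 < d" and "0 < g"
  shows "((\<lambda>g. integral (ball (0::'a::euclidean_space) (d * sqrt g)) gauss_kernel) has_field_derivative
      unit_ball_vol DIM('a) * DIM('a) * d ^ DIM('a) / 2 * (g powr (DIM('a) / 2 - 1) * exp (- (d * d / 2) * g)))
    (at g)" (is "(_ has_field_derivative ?target) _")
proof -
  let ?n = "DIM('a)" and ?R = "d * sqrt g"
  let ?chain = "exp (- (?R * ?R) / 2) * (unit_ball_vol ?n * (real ?n * ?R ^ (?n - 1))) * (d * (inverse (sqrt g) / 2))"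
  have chain: "((\<lambda>g. integral (ball (0::'a) (d * sqrt g)) gauss_kernel) has_field_derivative ?chain) (at g)"
  proof (rule DERIV_chain2[OF has_field_derivative_gauss_kernel_ball])
    show "((\<lambda>g. d * sqrt g) has_field_derivative d * (inverse (sqrt g) / 2)) (at g)"
      using assms by (auto intro!: derivative_eq_intros)
  qed (use assms in simp)
  have square: "?R * ?R = d * d * g"
    using assms by (simp add: algebra_simps)
  have power: "?R ^ (?n - 1) * (d * inverse (sqrt g)) = d ^ ?n * g powr (real ?n / 2 - 1)"
  proof -
    have "?R ^ (?n - 1) * (d * inverse (sqrt g)) = (d ^ (?n - 1) * d) * (sqrt g ^ (?n - 1) / sqrt g)"
      by (simp add: power_mult_distrib divide_inverse algebra_simps)
    also have "\<dots> = d ^ ?n * g powr (real ?n / 2 - 1)"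
      using sqrt_power_diff_one_div[OF assms(2), of ?n] by (simp add: power_eq_if)
    finally show ?thesis .
  qed
  have "?chain = unit_ball_vol ?n * ?n / 2 * exp (- (d * d / 2) * g) * (?R ^ (?n - 1) * (d * inverse (sqrt g)))"
    unfolding square by (simp add: algebra_simps)
  also have "\<dots> = ?target"
    unfolding power by (simp add: algebra_simps)
  finally show ?thesis
    using chain by (simp only:)
qed

lemma has_field_derivative_powr_mult_exp:
  fixes a b g :: real
  assumes "0 < g"
  shows "((\<lambda>g. g powr a * exp (- b * g)) has_field_derivative
      g powr (a - 1) * exp (- b * g) * (a - b * g)) (at g)"
proof -
  have "g powr a = g powr (a - 1) * g"
    using assms by (simp add: powr_diff)
  then show ?thesis
    using assms by (auto intro!: derivative_eq_intros simp: algebra_simps)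
qed

lemma avg_ser_balls_has_derivative:
  fixes s :: "nat \<Rightarrow> real^'n"
  assumes "(\<Sum>k<M. p k) = 1" and "0 < d"
  obtains C where "0 < C"
    and "\<And>g. 0 < g \<Longrightarrow> (avg_ser M p s (\<lambda>k. ball (s k) d) has_field_derivative
      - C * (g powr (real CARD('n) / 2 - 1) * exp (- (d * d / 2) * g))) (at g)"
proof
  let ?n = "CARD('n)"
  define K where "K = (2 * pi) powr (- real ?n / 2)"
  show "0 < K * (unit_ball_vol ?n * ?n * d ^ ?n / 2)"
    using assms(2) by (simp add: K_def)
  fix g :: real
  assume "0 < g"
  show "(avg_ser M p s (\<lambda>k. ball (s k) d) has_field_derivative
      - (K * (unit_ball_vol ?n * ?n * d ^ ?n / 2)) * (g powr (real ?n / 2 - 1) * exp (- (d * d / 2) * g))) (at g)"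
  proof (rule has_field_derivative_transform_within_open[where S = "{0<..}"])
    show "((\<lambda>x. 1 - K * integral (ball (0::real^'n) (d * sqrt x)) gauss_kernel) has_field_derivative
        - (K * (unit_ball_vol ?n * ?n * d ^ ?n / 2)) * (g powr (real ?n / 2 - 1) * exp (- (d * d / 2) * g))) (at g)"
      using has_field_derivative_gauss_kernel_ball_sqrt[OF assms(2) \<open>0 < g\<close>, where 'a = "real^'n"]
      by (auto intro!: derivative_eq_intros simp: algebra_simps)
  qed (use \<open>0 < g\<close> assms(1) in \<open>auto simp: K_def avg_ser_balls\<close>)
qed

theorem corollary3p1:
  fixes s :: "nat \<Rightarrow> real^'n" and p :: "nat \<Rightarrow> real" and M :: nat and d \<gamma> :: real
  assumes "M \<ge> 1"
    and "\<forall>k<M. p k \<ge> 0"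
    and "(\<Sum>k<M. p k) = 1"
    and "d > 0"
    and "\<forall>j<M. \<forall>k<M. j \<noteq> k \<longrightarrow> ball (s j) d \<inter> ball (s k) d = {}"
    and "\<gamma> > 0"
  defines "Pe \<equiv> avg_ser M p s (\<lambda>k. ball (s k) d)"
  shows "(\<forall>g>0. Pe differentiable (at g))
    \<and> (deriv Pe) differentiable (at \<gamma>)
    \<and> (\<gamma> > (real CARD('n) - 2) / d^2 \<longrightarrow> deriv (deriv Pe) \<gamma> > 0)
    \<and> (\<gamma> < (real CARD('n) - 2) / d^2 \<longrightarrow> deriv (deriv Pe) \<gamma> < 0)
    \<and> (\<gamma> = (real CARD('n) - 2) / d^2 \<longrightarrow> deriv (deriv Pe) \<gamma> = 0)"
proof -
  define a b where "a = real CARD('n) / 2 - 1" and "b = d * d / 2"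
  obtain C where "0 < C" and dPe: "\<And>g. 0 < g \<Longrightarrow> (Pe has_field_derivative - C * (g powr a * exp (- b * g))) (at g)"
    using avg_ser_balls_has_derivative[OF assms(3,4)] unfolding Pe_def a_def b_def by blast
  have ddPe: "(deriv Pe has_field_derivative - C * (\<gamma> powr (a - 1) * exp (- b * \<gamma>) * (a - b * \<gamma>))) (at \<gamma>)"
  proof (rule has_field_derivative_transform_within_open[where S = "{0<..}"])
    show "((\<lambda>x. - C * (x powr a * exp (- b * x))) has_field_derivative
        - C * (\<gamma> powr (a - 1) * exp (- b * \<gamma>) * (a - b * \<gamma>))) (at \<gamma>)"
      by (rule DERIV_cmult[OF has_field_derivative_powr_mult_exp[OF assms(6)]])
  qed (use assms(6) in \<open>simp_all add: DERIV_imp_deriv[OF dPe]\<close>)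
  define t where "t = (real CARD('n) - 2) / d\<^sup>2"
  define P where "P = C * (\<gamma> powr (a - 1) * exp (- b * \<gamma>)) * (d\<^sup>2 / 2)"
  have "a - b * \<gamma> = - (d\<^sup>2 / 2) * (\<gamma> - t)"
    using assms(4) by (simp add: a_def b_def t_def field_simps power2_eq_square)
  then have second: "deriv (deriv Pe) \<gamma> = P * (\<gamma> - t)"
    unfolding DERIV_imp_deriv[OF ddPe] P_def by (simp add: mult_ac)
  have "0 < P"
    using \<open>0 < C\<close> assms(4,6) by (simp add: P_def)
  moreover have "\<forall>g>0. Pe differentiable (at g)"
    using dPe real_differentiable_def by blast
  moreover have "deriv Pe differentiable (at \<gamma>)"
    using ddPe real_differentiable_def by blast
  ultimately show ?thesis
    unfolding t_def[symmetric] second by (simp add: mult_pos_neg)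
qed

end
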